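(* Let $w\in\{0,1\}^*$ and let $w'$ be a subword of $w$ such that $w'=abb\,\mu(w'')$ or $w'=\mu(w'')\,bba$ for some letters $a,b\in\{0,1\}$ with $a\neq b$ and some word $w''\in\{0,1\}^*$ with $|w''|\geq 2$. Then $w$ contains a $\frac{7}{3}$-power (i.e., $w$ is not $\frac{7}{3}$-power-free).
   Context: $\mu$ is the Thue–Morse morphism on $\{0,1\}^*$, defined by $\mu(0)=01$, $\mu(1)=10$. A word $w'$ is a subword of $w$ if $w=uw'v$ for some words $u,v$. For a rational $\alpha\ge 1$, an $\alpha$-power is a word of the form $x^nx'$ with $x$ a nonempty word, $x'$ a prefix of $x$, $n$ a nonnegative integer and $n+|x'|/|x|=\alpha$. A word is $\alpha$-power-free if none of its subwords is a $\beta$-power for any rational $\beta\geq\alpha$; otherwise it contains an $\alpha$-power. *)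

theory Defs
  imports Complex_Main "HOL-Library.Sublist"
begin

text \<open>Binary words are modelled as bool lists: False stands for 0, True for 1.\<close>

definition tm_mu :: "bool list \<Rightarrow> bool list" where
  "tm_mu w = concat (map (\<lambda>c. [c, \<not> c]) w)"

definition is_power :: "bool list \<Rightarrow> rat \<Rightarrow> bool" where
  "is_power z \<beta> \<longleftrightarrow> (\<exists>x x' n. x \<noteq> [] \<and> prefix x' x \<and>
      z = concat (replicate n x) @ x' \<and>
      of_nat n + of_nat (length x') / of_nat (length x) = \<beta>)"

definition contains_power :: "rat \<Rightarrow> bool list \<Rightarrow> bool" where
  "contains_power \<alpha> w \<longleftrightarrow> (\<exists>z \<beta>. sublist z w \<and> \<beta> \<ge> \<alpha> \<and> is_power z \<beta>)"

end

theory Submission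
  imports Defs
begin

text \<open>Seven letters suffice. Write \<open>a'\<close> for the complement of \<open>a\<close>. In the first case
  \<open>w'\<close> begins with \<open>a a' a' \<mu>(c d) = a a' a' c c' d d'\<close>. If \<open>c = a'\<close> this contains the cube
  \<open>a' a' a'\<close>; otherwise it is \<open>a a' a' a a' d d'\<close>, which contains the \<open>5/2\<close>-power
  \<open>a' a a' a a'\<close> if \<open>d = a\<close> and is the \<open>7/3\<close>-power \<open>(a a' a')\<^sup>2 a\<close> if \<open>d = a'\<close>.
  The second case is the mirror image of the first: reversal preserves powers and maps
  \<open>\<mu>(v)\<close> to \<open>\<mu>\<close> of the complemented reversal of \<open>v\<close>.\<close>

lemma tm_mu_Nil [simp]: "tm_mu [] = []"
  by (simp add: tm_mu_def)

lemma tm_mu_Cons [simp]: "tm_mu (c # xs) = c # (\<not> c) # tm_mu xs"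
  by (simp add: tm_mu_def)

lemma tm_mu_append [simp]: "tm_mu (xs @ ys) = tm_mu xs @ tm_mu ys"
  by (simp add: tm_mu_def)

lemma rev_tm_mu: "rev (tm_mu xs) = tm_mu (map Not (rev xs))"
  by (induction xs) simp_all

lemma contains_powerI:
  assumes "sublist (concat (replicate n x) @ x') w" and "x \<noteq> []" and "prefix x' x"
    and "\<alpha> \<le> of_nat n + of_nat (length x') / of_nat (length x)"
  shows "contains_power \<alpha> w"
  using assms unfolding contains_power_def is_power_def by blast

lemma contains_power_sublist:
  "contains_power \<alpha> z \<Longrightarrow> sublist z w \<Longrightarrow> contains_power \<alpha> w"
  unfolding contains_power_def using sublist_order.order.trans by blast

lemma concat_replicate_append_shift:
  "concat (replicate n (p @ q)) @ p = p @ concat (replicate n (q @ p))"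
  by (induction n) simp_all

lemma is_power_rev:
  assumes "is_power z \<beta>"
  shows "is_power (rev z) \<beta>"
proof -
  obtain x x' u n where "x \<noteq> []" and x: "x = x' @ u" and z: "z = concat (replicate n x) @ x'"
    and \<beta>: "\<beta> = of_nat n + of_nat (length x') / of_nat (length x)"
    using assms unfolding is_power_def prefix_def by blast
  define y where "y = rev x' @ rev u"
  have "length y = length x"
    by (simp add: x y_def)
  show ?thesis
    unfolding is_power_def
  proof (intro exI conjI)
    show "y \<noteq> []"
      using \<open>x \<noteq> []\<close> \<open>length y = length x\<close> by auto
    show "prefix (rev x') y"
      by (simp add: y_def)
    show "rev z = concat (replicate n y) @ rev x'"
      by (simp add: z x y_def concat_replicate_append_shift rev_concat)
    show "of_nat n + of_nat (length (rev x')) / of_nat (length y) = \<beta>"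
      by (simp add: \<beta> \<open>length y = length x\<close>)
  qed
qed

lemma contains_power_rev:
  assumes "contains_power \<alpha> (rev w)"
  shows "contains_power \<alpha> w"
proof -
  obtain z \<beta> where "sublist z (rev w)" and "\<beta> \<ge> \<alpha>" and "is_power z \<beta>"
    using assms unfolding contains_power_def by blast
  moreover from \<open>sublist z (rev w)\<close> have "sublist (rev z) w"
    by (simp add: sublist_rev_right)
  ultimately show ?thesis
    unfolding contains_power_def using is_power_rev by blast
qed

lemma cube_contains_power: "sublist [x, x, x] w \<Longrightarrow> contains_power (7/3) w"
  by (rule contains_powerI[where n = 3 and x = "[x]" and x' = "[]"])
    (simp_all add: numeral_3_eq_3)

lemma five_halves_power_contains_power:
  "sublist [x, y, x, y, x] w \<Longrightarrow> contains_power (7/3) w"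
  by (rule contains_powerI[where n = 2 and x = "[x, y]" and x' = "[x]"])
    (simp_all add: numeral_2_eq_2)

lemma seven_thirds_power_contains_power:
  "sublist [x, y, y, x, y, y, x] w \<Longrightarrow> contains_power (7/3) w"
  by (rule contains_powerI[where n = 2 and x = "[x, y, y]" and x' = "[x]"])
    (simp_all add: numeral_2_eq_2)

lemma contains_power_abb_tm_mu_pair:
  "contains_power (7/3) ([a, \<not> a, \<not> a] @ tm_mu [c, d])"
proof (cases "c = a")
  case False
  then have "c = (\<not> a)" by simp
  then show ?thesis
    by (intro cube_contains_power[of "\<not> a"]) (simp add: sublist_Cons_right)
next
  case True
  show ?thesis
  proof (cases "d = a")
    case True
    with \<open>c = a\<close> show ?thesis
      by (intro five_halves_power_contains_power[of "\<not> a" a]) (simp add: sublist_Cons_right)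
  next
    case False
    then have "d = (\<not> a)" by simp
    with \<open>c = a\<close> show ?thesis
      by (intro seven_thirds_power_contains_power[of a "\<not> a"]) simp
  qed
qed

lemma contains_power_abb_tm_mu:
  assumes "a \<noteq> b" and "length v \<ge> 2"
  shows "contains_power (7/3) ([a, b, b] @ tm_mu v)"
proof -
  obtain c d r where v: "v = c # d # r"
    using assms(2) by (metis Suc_le_length_iff numeral_2_eq_2)
  have "[a, b, b] @ tm_mu v = ([a, \<not> a, \<not> a] @ tm_mu [c, d]) @ tm_mu r"
    using assms(1) by (simp add: v)
  then show ?thesis
    using contains_power_abb_tm_mu_pair contains_power_sublist sublist_append_rightI by metis
qed

theorem lemma4:
  fixes w w' w'' :: "bool list" and a b :: bool
  assumes "sublist w' w"
    and "a \<noteq> b"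
    and "length w'' \<ge> 2"
    and "w' = [a, b, b] @ tm_mu w'' \<or> w' = tm_mu w'' @ [b, b, a]"
  shows "contains_power (7/3) w"
proof -
  have "contains_power (7/3) w'"
    using assms(4)
  proof
    assume "w' = [a, b, b] @ tm_mu w''"
    then show ?thesis
      using contains_power_abb_tm_mu[OF assms(2,3)] by simp
  next
    assume "w' = tm_mu w'' @ [b, b, a]"
    then have "rev w' = [a, b, b] @ tm_mu (map Not (rev w''))"
      by (simp add: rev_tm_mu)
    moreover have "contains_power (7/3) ([a, b, b] @ tm_mu (map Not (rev w'')))"
      using assms(2,3) by (intro contains_power_abb_tm_mu) simp_all
    ultimately show ?thesis
      by (simp add: contains_power_rev)
  qed
  then show ?thesis
    using assms(1) by (rule contains_power_sublist)
qed

end
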